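(* Let $(R,\mathfrak{m},k)$ be a Noetherian local ring and let $I,J$ be ideals of $R$ such that $J\mathfrak{m}\not\subseteq I\mathfrak{m}$. Then $I+J\mathfrak{m}$ is a Burch ideal. In particular, if $\dim R/I>0$ and $\dim R/J=0$, then $I+J\mathfrak{m}$ is a Burch ideal.
   Context: An ideal $L$ of a local ring $(R,\mathfrak{m})$ is called Burch if $L\mathfrak{m}:\mathfrak{m}\neq L:\mathfrak{m}$ (equivalently, $L\mathfrak{m}\neq (L:\mathfrak{m})\mathfrak{m}$). Here $A:B=\{r\in R: rB\subseteq A\}$. *)

theory Defs
  imports "HOL-Algebra.Ideal_Product" "HOL-Algebra.QuotRing" "HOL-Algebra.Ring_Divisibility"
    "HOL-Library.Extended_Real"
begin

definition local_ring :: "('a, 'b) ring_scheme \<Rightarrow> 'a set \<Rightarrow> bool" where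
  "local_ring R m \<longleftrightarrow> cring R \<and> maximalideal m R \<and> (\<forall>n. maximalideal n R \<longrightarrow> n = m)"

definition ideal_colon :: "('a, 'b) ring_scheme \<Rightarrow> 'a set \<Rightarrow> 'a set \<Rightarrow> 'a set" where
  "ideal_colon R A B = {r \<in> carrier R. \<forall>b\<in>B. r \<otimes>\<^bsub>R\<^esub> b \<in> A}"

definition burch_ideal :: "('a, 'b) ring_scheme \<Rightarrow> 'a set \<Rightarrow> 'a set \<Rightarrow> bool" where
  "burch_ideal R m L \<longleftrightarrow> ideal_colon R (ideal_prod R L m) m \<noteq> ideal_colon R L m"

(* Krull dimension: supremum of lengths n of chains P_0 \<subset> ... \<subset> P_n of prime ideals;
   the zero ring (no prime ideals) has dimension -\<infinity> (Sup of the empty set). *)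
definition krull_dim :: "('a, 'b) ring_scheme \<Rightarrow> ereal" where
  "krull_dim R = Sup {ereal (real n) | n. \<exists>P :: nat \<Rightarrow> 'a set.
      (\<forall>i\<le>n. primeideal (P i) R) \<and> (\<forall>i<n. P i \<subset> P (Suc i))}"

end

theory Submission
  imports Defs
begin

text \<open>
  Put L = I + J m. Since J m \<subseteq> L, J lies in L : m; were L not Burch, J would lie in L m : m, so
  J m \<subseteq> L m = I m + (J m) m, and Nakayama's lemma would give J m \<subseteq> I m.
  For the second claim, dim R/I > 0 yields primes I \<subseteq> P \<subset> Q \<subseteq> m, so m \<not>\<subseteq> P. If J m \<subseteq> I m \<subseteq> P,
  primality forces J \<subseteq> P, and the chain P \<subset> m gives dim R/J > 0.
\<close>

lemma (in ring) set_add_ideals_subset_iff: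
  assumes A: "ideal A R" and B: "ideal B R" and C: "ideal C R"
  shows "A <+>\<^bsub>R\<^esub> B \<subseteq> C \<longleftrightarrow> A \<subseteq> C \<and> B \<subseteq> C"
proof -
  have "A \<union> B \<subseteq> carrier R"
    using ideal.Icarr[OF A] ideal.Icarr[OF B] by blast
  then have "A \<union> B \<subseteq> Idl (A \<union> B)"
    by (rule genideal_self)
  then have "A \<union> B \<subseteq> A <+>\<^bsub>R\<^esub> B"
    unfolding union_genideal[OF A B] .
  moreover have "A <+>\<^bsub>R\<^esub> B \<subseteq> C" if "A \<union> B \<subseteq> C"
    using genideal_minimal[OF C that] unfolding union_genideal[OF A B] .
  ultimately show ?thesis
    by blast
qed

lemma (in ring) set_add_ideals_upper:
  assumes "ideal A R" and "ideal B R"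
  shows "A \<subseteq> A <+>\<^bsub>R\<^esub> B" and "B \<subseteq> A <+>\<^bsub>R\<^esub> B"
  using set_add_ideals_subset_iff[OF assms add_ideals[OF assms]] by simp_all

lemma (in ring) ideal_prod_subsetI:
  assumes "ideal C R" and "\<And>i j. i \<in> A \<Longrightarrow> j \<in> B \<Longrightarrow> i \<otimes> j \<in> C"
  shows "ideal_prod R A B \<subseteq> C"
proof
  fix s assume "s \<in> ideal_prod R A B"
  then show "s \<in> C"
    by (induct rule: ideal_prod.induct)
      (auto intro: assms(2) additive_subgroup.a_closed[OF ideal.axioms(1)[OF assms(1)]])
qed

lemma (in ring) ideal_prod_subset_iff_subset_colon:
  assumes "A \<subseteq> carrier R" and "ideal C R"
  shows "ideal_prod R A B \<subseteq> C \<longleftrightarrow> A \<subseteq> ideal_colon R C B"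
  using ideal_prod.prod[of _ A _ B R] ideal_prod_subsetI[OF assms(2)] assms(1)
  unfolding ideal_colon_def by blast

lemma (in ring) ideal_subset_maximalideal:
  assumes "ideal A R" and "A \<noteq> carrier R"
  obtains M where "maximalideal M R" and "A \<subseteq> M"
proof -
  let ?F = "{B. ideal B R \<and> A \<subseteq> B \<and> \<one> \<notin> B}"
  have "A \<in> ?F"
    using assms ideal.one_imp_carrier by blast
  then have "\<exists>M\<in>?F. \<forall>X\<in>?F. M \<subseteq> X \<longrightarrow> X = M"
  proof (intro subset_Zorn_nonempty)
    fix C assume C: "C \<noteq> {}" "subset.chain ?F C"
    then have "subset.chain {I. ideal I R} C"
      by (auto simp: pred_on.chain_def)
    from chain_Union_is_ideal[OF this] C(1) have "ideal (\<Union>C) R"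
      by simp
    moreover have "A \<subseteq> \<Union>C" and "\<one> \<notin> \<Union>C"
      using C unfolding pred_on.chain_def by blast+
    ultimately show "\<Union>C \<in> ?F" by blast
  qed blast
  then obtain M where M: "M \<in> ?F" and M_max: "\<forall>X\<in>?F. M \<subseteq> X \<longrightarrow> X = M"
    by blast
  have "maximalideal M R"
  proof (rule maximalidealI)
    show "ideal M R" and "carrier R \<noteq> M"
      using M by auto
  next
    fix J assume "ideal J R" and "M \<subseteq> J" and "J \<subseteq> carrier R"
    then show "J = M \<or> J = carrier R"
      using M M_max ideal.one_imp_carrier by blast
  qed
  with M that show thesis by blast
qed

lemma (in noetherian_ring) ideal_family_has_maximal:
  assumes "F \<subseteq> {I. ideal I R}" and "F \<noteq> {}"
  shows "\<exists>M\<in>F. \<forall>X\<in>F. M \<subseteq> X \<longrightarrow> X = M"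
proof (rule subset_Zorn_nonempty[OF assms(2)])
  fix C assume C: "C \<noteq> {}" "subset.chain F C"
  then have "subset.chain {I. ideal I R} C"
    using assms(1) by (auto simp: pred_on.chain_def)
  then have "\<Union>C \<in> C"
    using ideal_chain_is_trivial C(1) by blast
  then show "\<Union>C \<in> F"
    using C(2) by (auto simp: pred_on.chain_def)
qed

lemma local_ring_ideal_subset:
  assumes "local_ring R m" and "ideal A R" and "A \<noteq> carrier R"
  shows "A \<subseteq> m"
proof -
  interpret cring R
    using assms(1) by (simp add: local_ring_def)
  obtain M where "maximalideal M R" and "A \<subseteq> M"
    using ideal_subset_maximalideal assms(2,3) by blast
  then show ?thesis
    using assms(1) by (auto simp: local_ring_def)
qed

lemma local_ring_Units:
  fixes R (structure)
  assumes "local_ring R m" and "a \<in> carrier R" and "a \<notin> m"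
  shows "a \<in> Units R"
proof -
  interpret cring R
    using assms(1) by (simp add: local_ring_def)
  have "a \<in> PIdl a"
    using cgenideal_self assms(2) by blast
  then have "PIdl a = carrier R"
    using local_ring_ideal_subset[OF assms(1) cgenideal_ideal[OF assms(2)]] assms(3) by blast
  then obtain c where "c \<in> carrier R" and "\<one> = c \<otimes> a"
    unfolding cgenideal_def using one_closed by blast
  then show ?thesis
    using assms(2) m_comm unfolding Units_def by auto
qed

lemma local_ring_one_minus_Units:
  fixes R (structure)
  assumes "local_ring R m" and "r \<in> m"
  shows "\<one> \<ominus> r \<in> Units R"
proof -
  interpret maximalideal m R
    using assms(1) by (simp add: local_ring_def)
  have "\<one> \<ominus> r \<notin> m"
  proof
    assume "\<one> \<ominus> r \<in> m"
    then have "(\<one> \<ominus> r) \<oplus> r \<in> m"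
      using assms(2) a_closed by blast
    then have "\<one> \<in> m"
      using Icarr[OF assms(2)] by (simp add: minus_eq a_assoc l_neg)
    then show False
      using one_imp_carrier I_notcarr by simp
  qed
  then show ?thesis
    using local_ring_Units[OF assms(1)] Icarr[OF assms(2)] by simp
qed

text \<open>
  A maximal proper subideal L of S makes S / L a simple module, so m kills it. Concretely: if
  r y \<notin> L, then L + R r y = S \<ni> y, so (1 - c r) y \<in> L for some c, and 1 - c r is a unit.
\<close>
lemma local_ring_ideal_prod_subset_maximal_subideal:
  fixes R (structure)
  assumes loc: "local_ring R m" and S: "ideal S R" and L: "ideal L R" and "L \<subseteq> S"
    and L_max: "\<And>B. \<lbrakk>ideal B R; L \<subseteq> B; B \<subset> S\<rbrakk> \<Longrightarrow> B = L"
  shows "ideal_prod R S m \<subseteq> L"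
proof -
  interpret cring R
    using loc by (simp add: local_ring_def)
  interpret m: maximalideal m R
    using loc by (simp add: local_ring_def)
  have absorb: "r \<otimes> y \<in> L" if r: "r \<in> m" and y: "y \<in> S" for r y
  proof (rule ccontr)
    assume ry: "r \<otimes> y \<notin> L"
    have r_carr: "r \<in> carrier R" and y_carr: "y \<in> carrier R"
      using m.Icarr[OF r] ideal.Icarr[OF S y] .
    let ?B = "L <+>\<^bsub>R\<^esub> PIdl (r \<otimes> y)"
    have ry_PIdl: "ideal (PIdl (r \<otimes> y)) R"
      using cgenideal_ideal r_carr y_carr by simp
    have "?B \<subseteq> S"
      using set_add_ideals_subset_iff[OF L ry_PIdl S] \<open>L \<subseteq> S\<close>
        cgenideal_minimal[OF S] ideal.I_l_closed[OF S y r_carr] by blast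
    moreover have "r \<otimes> y \<in> ?B"
      using set_add_ideals_upper(2)[OF L ry_PIdl] cgenideal_self r_carr y_carr by blast
    ultimately have "?B = S"
      using L_max[OF add_ideals[OF L ry_PIdl] set_add_ideals_upper(1)[OF L ry_PIdl]] ry by blast
    then have "y \<in> ?B"
      using y by simp
    then obtain l c where l: "l \<in> L" and c: "c \<in> carrier R" and y_eq: "y = l \<oplus> c \<otimes> (r \<otimes> y)"
      unfolding set_add_def' cgenideal_def by blast
    have l_carr: "l \<in> carrier R"
      using ideal.Icarr[OF L l] .
    have u_y: "(\<one> \<ominus> c \<otimes> r) \<otimes> y = l"
    proof -
      have "(\<one> \<ominus> c \<otimes> r) \<otimes> y = y \<ominus> c \<otimes> (r \<otimes> y)"
        using c r_carr y_carr by (simp add: minus_eq l_distr l_minus m_assoc)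
      also have "\<dots> = l"
        using c r_carr y_carr l_carr by (subst y_eq) (simp add: minus_eq a_assoc r_neg)
      finally show ?thesis .
    qed
    have u: "\<one> \<ominus> c \<otimes> r \<in> Units R"
      using local_ring_one_minus_Units[OF loc m.I_l_closed[OF r c]] .
    then have "y = inv (\<one> \<ominus> c \<otimes> r) \<otimes> l"
      using y_carr Units_closed[OF u] Units_inv_closed[OF u]
      by (simp add: u_y[symmetric] m_assoc[symmetric])
    then have "y \<in> L"
      using ideal.I_l_closed[OF L l Units_inv_closed[OF u]] by simp
    then show False
      using ry ideal.I_l_closed[OF L _ r_carr] by blast
  qed
  show ?thesis
  proof (rule ideal_prod_subsetI[OF L])
    fix y r assume "y \<in> S" and "r \<in> m"
    then have "y \<otimes> r = r \<otimes> y"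
      using m_comm ideal.Icarr[OF S] m.Icarr by simp
    with absorb show "y \<otimes> r \<in> L"
      using \<open>y \<in> S\<close> \<open>r \<in> m\<close> by simp
  qed
qed

text \<open>
  No finite generating set is needed: a maximal ideal among those between K and K + N (it exists
  by noetherianity) absorbs m (K + N), hence N m, hence N.
\<close>
lemma local_ring_nakayama:
  fixes R (structure)
  assumes noeth: "noetherian_ring R" and loc: "local_ring R m"
    and K: "ideal K R" and N: "ideal N R" and N_sub: "N \<subseteq> K <+>\<^bsub>R\<^esub> ideal_prod R N m"
  shows "N \<subseteq> K"
proof (rule ccontr)
  assume "\<not> N \<subseteq> K"
  interpret cring R
    using loc by (simp add: local_ring_def)
  interpret m: maximalideal m R
    using loc by (simp add: local_ring_def)
  let ?S = "K <+>\<^bsub>R\<^esub> N"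
  have S: "ideal ?S R"
    using add_ideals[OF K N] .
  let ?F = "{B. ideal B R \<and> K \<subseteq> B \<and> B \<subset> ?S}"
  have K_S: "K \<subseteq> ?S" and N_S: "N \<subseteq> ?S"
    using set_add_ideals_upper[OF K N] .
  then have "K \<in> ?F"
    using K \<open>\<not> N \<subseteq> K\<close> by blast
  then have "\<exists>L\<in>?F. \<forall>X\<in>?F. L \<subseteq> X \<longrightarrow> X = L"
    by (intro noetherian_ring.ideal_family_has_maximal[OF noeth]) auto
  then obtain L where L: "ideal L R" "K \<subseteq> L" "L \<subset> ?S"
    and L_max: "\<forall>X\<in>?F. L \<subseteq> X \<longrightarrow> X = L"
    by blast
  have "ideal_prod R ?S m \<subseteq> L"
    using L L_max by (intro local_ring_ideal_prod_subset_maximal_subideal[OF loc S L(1)]) auto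
  moreover have "ideal_prod R N m \<subseteq> ideal_prod R ?S m"
  proof (rule ideal_prod_subsetI[OF ideal_prod_is_ideal[OF S m.is_ideal]])
    fix i j assume "i \<in> N" and "j \<in> m"
    then show "i \<otimes> j \<in> ideal_prod R ?S m"
      using N_S by (blast intro: ideal_prod.prod)
  qed
  ultimately have "K <+>\<^bsub>R\<^esub> ideal_prod R N m \<subseteq> L"
    using set_add_ideals_subset_iff[OF K ideal_prod_is_ideal[OF N m.is_ideal] L(1)] L(2) by simp
  then have "?S \<subseteq> L"
    using N_sub set_add_ideals_subset_iff[OF K N L(1)] L(2) by simp
  then show False
    using L(3) by simp
qed

lemma burch_ideal_add_ideal_prod:
  fixes R (structure)
  assumes noeth: "noetherian_ring R" and loc: "local_ring R m"
    and I: "ideal I R" and J: "ideal J R"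
    and not_sub: "\<not> ideal_prod R J m \<subseteq> ideal_prod R I m"
  shows "burch_ideal R m (I <+>\<^bsub>R\<^esub> ideal_prod R J m)"
  unfolding burch_ideal_def
proof
  interpret cring R
    using loc by (simp add: local_ring_def)
  interpret m: maximalideal m R
    using loc by (simp add: local_ring_def)
  let ?Jm = "ideal_prod R J m"
  let ?L = "I <+>\<^bsub>R\<^esub> ?Jm"
  assume colon_eq: "ideal_colon R (ideal_prod R ?L m) m = ideal_colon R ?L m"
  have Jm: "ideal ?Jm R" and Im: "ideal (ideal_prod R I m) R"
    using ideal_prod_is_ideal J I m.is_ideal by auto
  have L: "ideal ?L R"
    using add_ideals[OF I Jm] .
  have J_carr: "J \<subseteq> carrier R"
    using ideal.Icarr[OF J] by blast
  have "J \<subseteq> ideal_colon R ?L m"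
    using ideal_prod_subset_iff_subset_colon[OF J_carr L] set_add_ideals_upper(2)[OF I Jm] by blast
  then have "?Jm \<subseteq> ideal_prod R ?L m"
    using colon_eq ideal_prod_subset_iff_subset_colon[OF J_carr ideal_prod_is_ideal[OF L m.is_ideal]]
    by simp
  also have "\<dots> = ideal_prod R I m <+>\<^bsub>R\<^esub> ideal_prod R ?Jm m"
    using ideal_prod_distr(2)[OF m.is_ideal I Jm] .
  finally have "?Jm \<subseteq> ideal_prod R I m"
    by (rule local_ring_nakayama[OF noeth loc Im Jm])
  with not_sub show False ..
qed

lemma krull_dim_gt_0_iff:
  fixes R :: "('a, 'b) ring_scheme"
  shows "0 < krull_dim R \<longleftrightarrow> (\<exists>P Q. primeideal P R \<and> primeideal Q R \<and> P \<subset> Q)"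
proof
  assume "0 < krull_dim R"
  then obtain n and P :: "nat \<Rightarrow> 'a set"
    where "0 < n" and "\<forall>i\<le>n. primeideal (P i) R" and "\<forall>i<n. P i \<subset> P (Suc i)"
    unfolding krull_dim_def less_Sup_iff by auto
  then have "primeideal (P 0) R" and "primeideal (P 1) R" and "P 0 \<subset> P 1"
    by auto
  then show "\<exists>P Q. primeideal P R \<and> primeideal Q R \<and> P \<subset> Q"
    by blast
next
  assume "\<exists>P Q. primeideal P R \<and> primeideal Q R \<and> P \<subset> Q"
  then obtain P Q where "primeideal P R" and "primeideal Q R" and "P \<subset> Q"
    by blast
  define chain :: "nat \<Rightarrow> 'a set" where "chain i = (if i = 0 then P else Q)" for i
  have "\<forall>i\<le>1. primeideal (chain i) R"
    using \<open>primeideal P R\<close> \<open>primeideal Q R\<close> by (simp add: chain_def)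
  moreover have "\<forall>i<1. chain i \<subset> chain (Suc i)"
    using \<open>P \<subset> Q\<close> by (simp add: chain_def)
  ultimately have "ereal (real 1) \<in> {ereal (real n) | n. \<exists>P :: nat \<Rightarrow> 'a set.
      (\<forall>i\<le>n. primeideal (P i) R) \<and> (\<forall>i<n. P i \<subset> P (Suc i))}"
    by blast
  then have "ereal (real 1) \<le> krull_dim R"
    unfolding krull_dim_def by (rule Sup_upper)
  then show "0 < krull_dim R"
    using less_le_trans[of 0 "ereal 1"] by simp
qed

lemma (in ring) rcos_mem_quot_image_iff:
  assumes "ideal I R" and "ideal J R" and "I \<subseteq> J" and "r \<in> carrier R"
  shows "I +> r \<in> (+>) I ` J \<longleftrightarrow> r \<in> J"
proof -
  have image: "(+>) I ` J \<subseteq> carrier (R Quot I)"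
    using ideal.Icarr[OF ring_ideal_imp_quot_ideal[OF assms(1,2)]] by blast
  have union: "\<Union> ((+>) I ` J) = J"
    using ideal_incl_iff[OF assms(1,2)] assms(3) by simp
  show ?thesis
    using canonical_proj_vimage_mem_iff[OF assms(1) image assms(4), unfolded union] by (rule sym)
qed

lemma (in ring) quot_image_psubset_iff:
  assumes "ideal I R" and "ideal P R" and "ideal Q R" and "I \<subseteq> P" and "I \<subseteq> Q"
  shows "(+>) I ` P \<subset> (+>) I ` Q \<longleftrightarrow> P \<subset> Q"
proof -
  have P: "\<Union> ((+>) I ` P) = P" and Q: "\<Union> ((+>) I ` Q) = Q"
    using ideal_incl_iff assms by simp_all
  have "(+>) I ` P \<subseteq> (+>) I ` Q \<longleftrightarrow> P \<subseteq> Q"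
    using image_mono[of P Q "(+>) I"] Union_mono[of "(+>) I ` P" "(+>) I ` Q"] P Q by auto
  moreover have "(+>) I ` P = (+>) I ` Q \<longleftrightarrow> P = Q"
    using P Q by metis
  ultimately show ?thesis
    by (auto simp: psubset_eq)
qed

lemma (in cring) primeideal_quot_image_iff:
  assumes I: "ideal I R" and J: "ideal J R" and "I \<subseteq> J"
  shows "primeideal ((+>) I ` J) (R Quot I) \<longleftrightarrow> primeideal J R"
proof -
  have mem: "I +> r \<in> (+>) I ` J \<longleftrightarrow> r \<in> J" if "r \<in> carrier R" for r
    using rcos_mem_quot_image_iff[OF I J \<open>I \<subseteq> J\<close> that] .
  have quot_elem: "\<exists>x\<in>carrier R. X = I +> x" if "X \<in> carrier (R Quot I)" for X
    using that unfolding FactRing_def A_RCOSETS_def'[of R I] by auto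
  show ?thesis
  proof
    assume "primeideal ((+>) I ` J) (R Quot I)"
    then have "primeideal {r \<in> carrier R. I +> r \<in> (+>) I ` J} R"
      by (rule ring_hom_ring.primeideal_vimage[OF ideal.rcos_ring_hom_ring[OF I] is_cring])
    moreover have "{r \<in> carrier R. I +> r \<in> (+>) I ` J} = J"
      using mem ideal.Icarr[OF J] by blast
    ultimately show "primeideal J R"
      by simp
  next
    assume "primeideal J R"
    then interpret J: primeideal J R .
    show "primeideal ((+>) I ` J) (R Quot I)"
    proof (rule primeidealI[OF ring_ideal_imp_quot_ideal[OF I J] ideal.quotient_is_cring[OF I is_cring]])
      have "I +> \<one> \<in> carrier (R Quot I)"
        unfolding FactRing_def A_RCOSETS_def'[of R I] by auto
      moreover have "I +> \<one> \<notin> (+>) I ` J"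
        using mem J.I_notcarr J.one_imp_carrier by auto
      ultimately show "carrier (R Quot I) \<noteq> (+>) I ` J"
        by blast
    next
      fix a b
      assume "a \<in> carrier (R Quot I)" and "b \<in> carrier (R Quot I)"
        and ab: "a \<otimes>\<^bsub>R Quot I\<^esub> b \<in> (+>) I ` J"
      then obtain x y where x: "x \<in> carrier R" "a = I +> x" and y: "y \<in> carrier R" "b = I +> y"
        using quot_elem by blast
      have "a \<otimes>\<^bsub>R Quot I\<^esub> b = I +> (x \<otimes> y)"
        unfolding FactRing_def using x y ideal.rcoset_mult_add[OF I] by simp
      then have "x \<otimes> y \<in> J"
        using mem ab x(1) y(1) by simp
      then show "a \<in> (+>) I ` J \<or> b \<in> (+>) I ` J"
        using J.I_prime x y by blast
    qed
  qed
qed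

lemma (in cring) krull_dim_quot_gt_0_iff:
  assumes I: "ideal I R"
  shows "0 < krull_dim (R Quot I) \<longleftrightarrow>
    (\<exists>P Q. primeideal P R \<and> primeideal Q R \<and> I \<subseteq> P \<and> P \<subset> Q)"
proof
  assume "0 < krull_dim (R Quot I)"
  then obtain P' Q' where P': "primeideal P' (R Quot I)" and Q': "primeideal Q' (R Quot I)"
    and "P' \<subset> Q'"
    using krull_dim_gt_0_iff[of "R Quot I"] by blast
  have quot_ideal: "\<exists>J. ideal J R \<and> I \<subseteq> J \<and> X = (+>) I ` J" if "ideal X (R Quot I)" for X
  proof -
    have "X \<in> (\<lambda>J. (+>) I ` J) ` {J. ideal J R \<and> I \<subseteq> J}"
      using that bij_betw_imp_surj_on[OF quot_ideal_correspondence[OF I]] by simp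
    then show ?thesis
      by blast
  qed
  obtain P where P: "ideal P R" "I \<subseteq> P" "P' = (+>) I ` P"
    using quot_ideal[OF primeideal.axioms(1)[OF P']] by blast
  obtain Q where Q: "ideal Q R" "I \<subseteq> Q" "Q' = (+>) I ` Q"
    using quot_ideal[OF primeideal.axioms(1)[OF Q']] by blast
  have "primeideal P R" and "primeideal Q R"
    using P' Q' primeideal_quot_image_iff[OF I P(1,2)] primeideal_quot_image_iff[OF I Q(1,2)]
    unfolding P(3) Q(3) by simp_all
  moreover have "P \<subset> Q"
    using \<open>P' \<subset> Q'\<close> quot_image_psubset_iff[OF I P(1) Q(1) P(2) Q(2)] unfolding P(3) Q(3) by simp
  ultimately show "\<exists>P Q. primeideal P R \<and> primeideal Q R \<and> I \<subseteq> P \<and> P \<subset> Q"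
    using P(2) by blast
next
  assume "\<exists>P Q. primeideal P R \<and> primeideal Q R \<and> I \<subseteq> P \<and> P \<subset> Q"
  then obtain P Q where P: "primeideal P R" and Q: "primeideal Q R" and "I \<subseteq> P" and "P \<subset> Q"
    by blast
  have P_ideal: "ideal P R" and Q_ideal: "ideal Q R" and "I \<subseteq> Q"
    using primeideal.axioms(1) P Q \<open>I \<subseteq> P\<close> \<open>P \<subset> Q\<close> by auto
  have "primeideal ((+>) I ` P) (R Quot I)" and "primeideal ((+>) I ` Q) (R Quot I)"
    using P Q primeideal_quot_image_iff[OF I P_ideal \<open>I \<subseteq> P\<close>]
      primeideal_quot_image_iff[OF I Q_ideal \<open>I \<subseteq> Q\<close>] by simp_all
  moreover have "(+>) I ` P \<subset> (+>) I ` Q"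
    using \<open>P \<subset> Q\<close> quot_image_psubset_iff[OF I P_ideal Q_ideal \<open>I \<subseteq> P\<close> \<open>I \<subseteq> Q\<close>] by simp
  ultimately show "0 < krull_dim (R Quot I)"
    using krull_dim_gt_0_iff[of "R Quot I"] by blast
qed

lemma local_ring_krull_dim_quot_gt_0:
  fixes R (structure)
  assumes loc: "local_ring R m" and I: "ideal I R" and J: "ideal J R"
    and dim_I: "0 < krull_dim (R Quot I)" and Jm_I: "ideal_prod R J m \<subseteq> I"
  shows "0 < krull_dim (R Quot J)"
proof -
  interpret cring R
    using loc by (simp add: local_ring_def)
  interpret m: maximalideal m R
    using loc by (simp add: local_ring_def)
  obtain P Q where P: "primeideal P R" and Q: "primeideal Q R" and "I \<subseteq> P" and "P \<subset> Q"
    using dim_I krull_dim_quot_gt_0_iff[OF I] by blast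
  have "Q \<subseteq> m"
    using local_ring_ideal_subset[OF loc primeideal.axioms(1)[OF Q]] primeideal.I_notcarr[OF Q] by auto
  then have "\<not> m \<subseteq> P"
    using \<open>P \<subset> Q\<close> by blast
  moreover have "ideal_prod R J m \<subseteq> P"
    using Jm_I \<open>I \<subseteq> P\<close> by blast
  ultimately have "J \<subseteq> P"
    using primeideal_divides_ideal_prod[OF P J m.is_ideal] by blast
  moreover have "P \<subset> m"
    using \<open>P \<subset> Q\<close> \<open>Q \<subseteq> m\<close> by blast
  ultimately show ?thesis
    using krull_dim_quot_gt_0_iff[OF J] P maximalideal_prime[OF m.is_maximalideal] by blast
qed

theorem proposition3p7:
  fixes R :: "('a, 'b) ring_scheme" and m I J :: "'a set"
  assumes "noetherian_ring R"
    and "local_ring R m"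
    and "ideal I R" and "ideal J R"
  shows "(\<not> ideal_prod R J m \<subseteq> ideal_prod R I m \<longrightarrow>
            burch_ideal R m (I <+>\<^bsub>R\<^esub> ideal_prod R J m))
       \<and> (krull_dim (R Quot I) > 0 \<and> krull_dim (R Quot J) = 0 \<longrightarrow>
            burch_ideal R m (I <+>\<^bsub>R\<^esub> ideal_prod R J m))"
proof (intro conjI impI)
  assume "\<not> ideal_prod R J m \<subseteq> ideal_prod R I m"
  then show "burch_ideal R m (I <+>\<^bsub>R\<^esub> ideal_prod R J m)"
    by (rule burch_ideal_add_ideal_prod[OF assms])
next
  assume dims: "krull_dim (R Quot I) > 0 \<and> krull_dim (R Quot J) = 0"
  interpret cring R
    using assms(2) by (simp add: local_ring_def)
  interpret m: maximalideal m R
    using assms(2) by (simp add: local_ring_def)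
  have "ideal_prod R I m \<subseteq> I"
    using ideal_prod_inter[OF assms(3) m.is_ideal] by blast
  then have "\<not> ideal_prod R J m \<subseteq> ideal_prod R I m"
    using local_ring_krull_dim_quot_gt_0[OF assms(2-4)] dims by auto
  then show "burch_ideal R m (I <+>\<^bsub>R\<^esub> ideal_prod R J m)"
    by (rule burch_ideal_add_ideal_prod[OF assms])
qed

end
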